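(* Let $M,K\in\mathbb{R}^{m\times m}$ be symmetric positive definite, $\nu>0$, $\omega>0$, $\theta=1+\nu\omega^2$. Let $\lambda_{\min},\lambda_{\max}$ (resp. $\mu_{\min},\mu_{\max}$) be the smallest and largest eigenvalues of $M$ (resp. $K$). Define for $\alpha>0$ \[ \chi(\alpha)=\max_{\lambda\in\sigma(M)}\frac{\sqrt{\alpha^2+\theta^2\lambda^2}}{\alpha+\theta\lambda},\qquad \vartheta(\alpha)=\max_{\mu\in\sigma(K)}\frac{\sqrt{\alpha^2+\nu\theta\mu^2}}{\alpha+\sqrt{\nu\theta}\,\mu}. \] Then $\alpha_1=\theta\sqrt{\lambda_{\min}\lambda_{\max}}$ minimizes $\chi$ over $\alpha>0$ and $\alpha_2=\sqrt{\nu\theta\,\mu_{\min}\mu_{\max}}$ minimizes $\vartheta$ over $\alpha>0$. Moreover, with $P_\alpha$ the MBAS iteration matrix defined in the context, $\rho(P_\alpha)\le\chi(\alpha)$ and $\rho(P_\alpha)\le\vartheta(\alpha)$ for all $\alpha>0$.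
   Context: $\sigma(\cdot)$ is the spectrum and $\rho(\cdot)$ the spectral radius. With $I$ the $m\times m$ identity, $H_1=\begin{pmatrix} M&0\\0&M\end{pmatrix}$, $H_2=\begin{pmatrix} K&0\\0&K\end{pmatrix}$, $R=\frac{1}{\sqrt{\nu\theta}}\begin{pmatrix} -i\omega\nu I & \sqrt{\nu} I\\ -\sqrt{\nu} I & i\omega\nu I\end{pmatrix}$, the MBAS iteration matrix is $P_\alpha=(\alpha I_{2m}+\sqrt{\nu\theta}H_2)^{-1}(\alpha I_{2m}+\theta RH_1)(\alpha I_{2m}+\theta H_1)^{-1}(\alpha I_{2m}-\sqrt{\nu\theta}RH_2)$. *)

theory Defs
  imports "Jordan_Normal_Form.Spectral_Radius" "Jordan_Normal_Form.Gauss_Jordan_Elimination"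
begin

definition spd_mat :: "nat \<Rightarrow> real mat \<Rightarrow> bool" where
  "spd_mat m A \<longleftrightarrow> A \<in> carrier_mat m m \<and> transpose_mat A = A \<and>
     (\<forall>v \<in> carrier_vec m. v \<noteq> 0\<^sub>v m \<longrightarrow> scalar_prod v (A *\<^sub>v v) > 0)"

definition minv :: "complex mat \<Rightarrow> complex mat" where
  "minv A = the (mat_inverse A)"

definition chi :: "real mat \<Rightarrow> real \<Rightarrow> real \<Rightarrow> real" where
  "chi M \<theta> \<alpha> = Max ((\<lambda>l. sqrt (\<alpha>\<^sup>2 + \<theta>\<^sup>2 * l\<^sup>2) / (\<alpha> + \<theta> * l)) ` spectrum M)"

definition vtheta :: "real mat \<Rightarrow> real \<Rightarrow> real \<Rightarrow> real \<Rightarrow> real" where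
  "vtheta K \<nu> \<theta> \<alpha> = Max ((\<lambda>u. sqrt (\<alpha>\<^sup>2 + \<nu> * \<theta> * u\<^sup>2) / (\<alpha> + sqrt (\<nu> * \<theta>) * u)) ` spectrum K)"

definition cmat :: "real mat \<Rightarrow> complex mat" where
  "cmat A = map_mat complex_of_real A"

definition blockdiag :: "nat \<Rightarrow> complex mat \<Rightarrow> complex mat" where
  "blockdiag m A = four_block_mat A (0\<^sub>m m m) (0\<^sub>m m m) A"

definition Rmat :: "nat \<Rightarrow> real \<Rightarrow> real \<Rightarrow> real \<Rightarrow> complex mat" where
  "Rmat m \<nu> \<omega> \<theta> = (complex_of_real (1 / sqrt (\<nu> * \<theta>))) \<cdot>\<^sub>m
     four_block_mat ((- \<i> * complex_of_real (\<omega> * \<nu>)) \<cdot>\<^sub>m 1\<^sub>m m) (complex_of_real (sqrt \<nu>) \<cdot>\<^sub>m 1\<^sub>m m)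
                    ((- complex_of_real (sqrt \<nu>)) \<cdot>\<^sub>m 1\<^sub>m m) ((\<i> * complex_of_real (\<omega> * \<nu>)) \<cdot>\<^sub>m 1\<^sub>m m)"

definition MBAS :: "nat \<Rightarrow> real mat \<Rightarrow> real mat \<Rightarrow> real \<Rightarrow> real \<Rightarrow> real \<Rightarrow> complex mat" where
  "MBAS m M K \<nu> \<omega> \<alpha> = (let \<theta> = 1 + \<nu> * \<omega>\<^sup>2; H1 = blockdiag m (cmat M); H2 = blockdiag m (cmat K);
      R = Rmat m \<nu> \<omega> \<theta>; I = 1\<^sub>m (2*m); a = complex_of_real \<alpha>;
      s = complex_of_real (sqrt (\<nu> * \<theta>)); t = complex_of_real \<theta> in
     minv (a \<cdot>\<^sub>m I + s \<cdot>\<^sub>m H2) * (a \<cdot>\<^sub>m I + t \<cdot>\<^sub>m (R * H1)) *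
     minv (a \<cdot>\<^sub>m I + t \<cdot>\<^sub>m H1) * (a \<cdot>\<^sub>m I - s \<cdot>\<^sub>m (R * H2)))"

end

theory Submission
  imports Defs
begin

text \<open>Let \<open>l\<close> be an eigenvalue of \<open>P\<^sub>\<alpha> = A\<^sup>-\<^sup>1 B C\<^sup>-\<^sup>1 D\<close> with eigenvector \<open>v\<close> and put
  \<open>y = C\<^sup>-\<^sup>1 D v\<close>, so that \<open>B y = l A v\<close> and \<open>C y = D v\<close>. The matrix \<open>R\<close> is unitary, skew-Hermitian
  and commutes with the block-diagonal \<open>H\<^sub>1, H\<^sub>2\<close>, hence \<open>\<parallel>(\<alpha> + t R H) y\<parallel>\<^sup>2 = \<alpha>\<^sup>2\<parallel>y\<parallel>\<^sup>2 + t\<^sup>2\<parallel>H y\<parallel>\<^sup>2\<close>.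
  On the other hand, if \<open>\<surd>(\<alpha>\<^sup>2 + c\<^sup>2\<lambda>\<^sup>2) / (\<alpha> + c\<lambda>) \<le> \<chi> < 1\<close> on the spectrum of the Hermitian \<open>H\<close>, this
  quadratic inequality in \<open>\<lambda>\<close> confines the spectrum to an interval \<open>[t - r, t + r]\<close>; then
  \<open>\<parallel>(H - t) y\<parallel> \<le> r \<parallel>y\<parallel>\<close>, which expands to \<open>\<alpha>\<^sup>2\<parallel>y\<parallel>\<^sup>2 + c\<^sup>2\<parallel>H y\<parallel>\<^sup>2 \<le> \<chi>\<^sup>2 \<parallel>(\<alpha> + c H) y\<parallel>\<^sup>2\<close>.
  Chaining the two for \<open>B, C\<close> and for \<open>D, A\<close> yields \<open>|l| \<le> \<chi>(\<alpha>) \<vartheta>(\<alpha>)\<close>, and both factors lie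
  in \<open>[0, 1)\<close>.

  For the optimal parameters, write the factor as \<open>\<surd>(u\<^sup>2 + \<lambda>\<^sup>2) / (u + \<lambda>)\<close> with \<open>u = \<alpha> / c\<close>. On
  \<open>[\<lambda>\<^sub>m\<^sub>i\<^sub>n, \<lambda>\<^sub>m\<^sub>a\<^sub>x]\<close> it is maximal at an endpoint; at \<open>u = \<surd>(\<lambda>\<^sub>m\<^sub>i\<^sub>n \<lambda>\<^sub>m\<^sub>a\<^sub>x)\<close> both endpoints give the
  same value, and moving \<open>u\<close> in either direction increases one of them.\<close>

section \<open>The scalar convergence factor\<close>

definition conv_factor :: "real \<Rightarrow> real \<Rightarrow> real \<Rightarrow> real" where
  "conv_factor c \<alpha> l = sqrt (\<alpha>\<^sup>2 + c\<^sup>2 * l\<^sup>2) / (\<alpha> + c * l)"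

lemma conv_factor_scale:
  assumes "c > 0" shows "conv_factor c \<alpha> l = conv_factor 1 (\<alpha> / c) l"
proof -
  have "\<alpha>\<^sup>2 + c\<^sup>2 * l\<^sup>2 = c\<^sup>2 * ((\<alpha> / c)\<^sup>2 + l\<^sup>2)" and "\<alpha> + c * l = c * (\<alpha> / c + l)"
    using assms by (simp_all add: field_simps)
  then show ?thesis using assms unfolding conv_factor_def by (simp add: real_sqrt_mult)
qed

lemma conv_factor_commute: "conv_factor 1 u l = conv_factor 1 l u"
  unfolding conv_factor_def by (simp add: add.commute)

lemma conv_factor_nonneg: "\<alpha> > 0 \<Longrightarrow> c > 0 \<Longrightarrow> l > 0 \<Longrightarrow> conv_factor c \<alpha> l \<ge> 0"
  unfolding conv_factor_def by simp

lemma conv_factor_less_1: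
  assumes "\<alpha> > 0" "c > 0" "l > 0" shows "conv_factor c \<alpha> l < 1"
proof -
  have "sqrt (\<alpha>\<^sup>2 + c\<^sup>2 * l\<^sup>2) < sqrt ((\<alpha> + c * l)\<^sup>2)"
    using assms by (intro real_sqrt_less_mono) (simp add: power2_eq_square algebra_simps)
  moreover have "\<alpha> + c * l > 0" using assms by (simp add: add_pos_pos)
  ultimately show ?thesis using assms unfolding conv_factor_def by (simp add: divide_less_eq)
qed

lemma conv_factor_square:
  assumes "\<alpha> > 0" "c > 0" "l > 0"
  shows "(conv_factor c \<alpha> l)\<^sup>2 = (\<alpha>\<^sup>2 + c\<^sup>2 * l\<^sup>2) / (\<alpha> + c * l)\<^sup>2"
  using assms unfolding conv_factor_def by (simp add: power_divide)

lemma conv_factor_le_iff: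
  assumes "u > 0" "x > 0" "y > 0"
  shows "conv_factor 1 u x \<le> conv_factor 1 u y \<longleftrightarrow> 0 \<le> (x - y) * (u\<^sup>2 - x * y)"
proof -
  have pos: "(u + x)\<^sup>2 > 0" "(u + y)\<^sup>2 > 0" using assms by simp_all
  have "conv_factor 1 u x \<le> conv_factor 1 u y \<longleftrightarrow> (conv_factor 1 u x)\<^sup>2 \<le> (conv_factor 1 u y)\<^sup>2"
    using assms by (simp add: conv_factor_nonneg power2_le_iff_abs_le)
  also have "\<dots> \<longleftrightarrow> (u\<^sup>2 + x\<^sup>2) * (u + y)\<^sup>2 \<le> (u\<^sup>2 + y\<^sup>2) * (u + x)\<^sup>2"
    using assms pos by (simp add: conv_factor_square divide_le_eq le_divide_eq field_simps)
  also have "(u\<^sup>2 + y\<^sup>2) * (u + x)\<^sup>2 - (u\<^sup>2 + x\<^sup>2) * (u + y)\<^sup>2 = 2 * u * ((x - y) * (u\<^sup>2 - x * y))"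
    by (simp add: power2_eq_square algebra_simps)
  then have "(u\<^sup>2 + x\<^sup>2) * (u + y)\<^sup>2 \<le> (u\<^sup>2 + y\<^sup>2) * (u + x)\<^sup>2 \<longleftrightarrow> 0 \<le> 2 * u * ((x - y) * (u\<^sup>2 - x * y))"
    by linarith
  also have "\<dots> \<longleftrightarrow> 0 \<le> (x - y) * (u\<^sup>2 - x * y)"
    using assms by (simp add: zero_le_mult_iff)
  finally show ?thesis .
qed

lemma Max_conv_factor_geometric_mean_le:
  assumes S: "finite S" "\<forall>x\<in>S. x > 0" and a: "a \<in> S" and b: "b \<in> S"
    and ab: "\<forall>x\<in>S. a \<le> x \<and> x \<le> b" and u: "u > 0"
  shows "Max (conv_factor 1 (sqrt (a * b)) ` S) \<le> Max (conv_factor 1 u ` S)"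
proof -
  define r where "r = sqrt (a * b)"
  have pos: "a > 0" "b > 0" "r > 0" using S a b r_def by auto
  have rr: "r\<^sup>2 = a * b" using pos r_def by simp
  have "a \<le> b" using ab a by blast
  have ar: "a * a \<le> r * r" "r * r \<le> b * b"
    using rr \<open>a \<le> b\<close> pos by (auto simp: power2_eq_square intro: mult_left_mono mult_right_mono)
  then have "a \<le> r" "r \<le> b" using pos by (auto simp: power2_eq_square intro: power2_le_imp_le)
  have at_b: "conv_factor 1 r x \<le> conv_factor 1 r b" if "x \<in> S" for x
  proof -
    have "x \<le> b" "a * b \<le> x * b" using ab that pos by (auto intro: mult_right_mono)
    then show ?thesis using conv_factor_le_iff pos that S rr by (simp add: mult_nonpos_nonpos)
  qed
  have "conv_factor 1 r a = conv_factor 1 r b"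
    using conv_factor_le_iff[of r a b] conv_factor_le_iff[of r b a] pos rr by auto
  moreover have "conv_factor 1 r b \<le> conv_factor 1 u b" if "u \<le> r"
  proof -
    have "u * r \<le> b * b" using that pos ar(2) by (meson mult_right_mono order_trans less_imp_le)
    then show ?thesis using conv_factor_le_iff[of b r u] conv_factor_commute pos u that
      by (simp add: power2_eq_square mult.commute)
  qed
  moreover have "conv_factor 1 r a \<le> conv_factor 1 u a" if "r \<le> u"
  proof -
    have "a * a \<le> u * r" using that pos ar(1) by (meson mult_right_mono order_trans less_imp_le)
    then show ?thesis using conv_factor_le_iff[of a r u] conv_factor_commute pos u that
      by (simp add: power2_eq_square mult.commute mult_nonpos_nonpos)
  qed
  ultimately have "\<exists>x\<in>S. conv_factor 1 r b \<le> conv_factor 1 u x"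
    using a b by (metis linear)
  then have "conv_factor 1 r b \<le> Max (conv_factor 1 u ` S)"
    using S(1) by (meson Max_ge finite_imageI image_eqI order_trans)
  moreover have "Max (conv_factor 1 r ` S) \<le> conv_factor 1 r b"
    using S b at_b by (subst Max_le_iff) auto
  ultimately show ?thesis unfolding r_def by linarith
qed

lemma Max_conv_factor_optimal:
  assumes "finite S" "S \<noteq> {}" "\<forall>x\<in>S. x > 0" and "c > 0" "\<alpha> > 0"
  shows "Max (conv_factor c (c * sqrt (Min S * Max S)) ` S) \<le> Max (conv_factor c \<alpha> ` S)"
proof -
  have "c * sqrt (Min S * Max S) / c = sqrt (Min S * Max S)" using assms by simp
  then show ?thesis
    using Max_conv_factor_geometric_mean_le[of S "Min S" "Max S" "\<alpha> / c"] assms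
    by (simp add: conv_factor_scale[of c])
qed

section \<open>Real symmetric matrices acting on complex vectors\<close>

definition sq_norm :: "complex vec \<Rightarrow> real" where
  "sq_norm v = Re (v \<bullet>c v)"

lemma cscalar_prod_add_left:
  "u \<in> carrier_vec n \<Longrightarrow> v \<in> carrier_vec n \<Longrightarrow> w \<in> carrier_vec n \<Longrightarrow> (u + v) \<bullet>c w = u \<bullet>c w + v \<bullet>c w"
  by (rule add_scalar_prod_distrib[of _ n]) auto

lemma cscalar_prod_add_right:
  "u \<in> carrier_vec n \<Longrightarrow> v \<in> carrier_vec n \<Longrightarrow> w \<in> carrier_vec n \<Longrightarrow> u \<bullet>c (v + w) = u \<bullet>c v + u \<bullet>c w"
  by (simp add: conjugate_add_vec[of _ n] scalar_prod_add_distrib[of _ n])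

lemma cscalar_prod_smult_left:
  "u \<in> carrier_vec n \<Longrightarrow> w \<in> carrier_vec n \<Longrightarrow> (a \<cdot>\<^sub>v u) \<bullet>c w = a * (u \<bullet>c w)"
  by (rule smult_scalar_prod_distrib[of _ n]) auto

lemma cscalar_prod_smult_right:
  "u \<in> carrier_vec n \<Longrightarrow> w \<in> carrier_vec n \<Longrightarrow> u \<bullet>c (a \<cdot>\<^sub>v w) = cnj a * (u \<bullet>c w)"
  by (simp add: conjugate_smult_vec scalar_prod_smult_distrib[of _ n])

lemma cscalar_prod_swap: "u \<in> carrier_vec n \<Longrightarrow> w \<in> carrier_vec n \<Longrightarrow> w \<bullet>c u = cnj (u \<bullet>c w)"
  by (metis conjugate_complex_def conjugate_conjugate_sprod conjugate_vec_sprod_comm)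

lemma cscalar_prod_self: "v \<bullet>c v = complex_of_real (sq_norm v)"
  using conjugate_square_ge_0_vec[of v] unfolding sq_norm_def
  by (simp add: complex_eq_iff less_eq_complex_def)

lemma sq_norm_nonneg: "sq_norm v \<ge> 0"
  using conjugate_square_ge_0_vec[of v] unfolding sq_norm_def by (simp add: less_eq_complex_def)

lemma sq_norm_eq_0_iff: "v \<in> carrier_vec n \<Longrightarrow> sq_norm v = 0 \<longleftrightarrow> v = 0\<^sub>v n"
  using cscalar_prod_self[of v] conjugate_square_eq_0_vec[of v n] by auto

lemma sq_norm_zero [simp]: "sq_norm (0\<^sub>v n) = 0"
  using sq_norm_eq_0_iff[of "0\<^sub>v n" n] by simp

lemma sq_norm_add:
  "u \<in> carrier_vec n \<Longrightarrow> w \<in> carrier_vec n \<Longrightarrow> sq_norm (u + w) = sq_norm u + sq_norm w + 2 * Re (u \<bullet>c w)"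
  unfolding sq_norm_def
  by (simp add: cscalar_prod_add_left[of _ n] cscalar_prod_add_right[of _ n] cscalar_prod_swap[of w n u])

lemma sq_norm_smult:
  assumes "u \<in> carrier_vec n" shows "sq_norm (a \<cdot>\<^sub>v u) = (cmod a)\<^sup>2 * sq_norm u"
proof -
  have "(a \<cdot>\<^sub>v u) \<bullet>c (a \<cdot>\<^sub>v u) = (a * cnj a) * (u \<bullet>c u)"
    using assms by (simp add: cscalar_prod_smult_left[of _ n] cscalar_prod_smult_right[of _ n])
  also have "\<dots> = complex_of_real ((cmod a)\<^sup>2 * sq_norm u)"
    by (simp add: cscalar_prod_self complex_norm_square[symmetric])
  finally show ?thesis unfolding sq_norm_def by simp
qed

lemma cscalar_prod_append:
  "x \<in> carrier_vec n \<Longrightarrow> x' \<in> carrier_vec n \<Longrightarrow> y \<in> carrier_vec m \<Longrightarrow> y' \<in> carrier_vec m \<Longrightarrow>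
   (x @\<^sub>v y) \<bullet>c (x' @\<^sub>v y') = x \<bullet>c x' + y \<bullet>c y'"
proof -
  have "conjugate (x' @\<^sub>v y') = conjugate x' @\<^sub>v conjugate y'" by (intro eq_vecI) auto
  then show "x \<in> carrier_vec n \<Longrightarrow> x' \<in> carrier_vec n \<Longrightarrow> y \<in> carrier_vec m \<Longrightarrow> y' \<in> carrier_vec m \<Longrightarrow> ?thesis"
    by (simp add: scalar_prod_append)
qed

lemma sq_norm_append: "x \<in> carrier_vec n \<Longrightarrow> y \<in> carrier_vec m \<Longrightarrow> sq_norm (x @\<^sub>v y) = sq_norm x + sq_norm y"
  unfolding sq_norm_def by (simp add: cscalar_prod_append)

lemma sq_norm_eq_sum: "sq_norm w = (\<Sum>i<dim_vec w. (cmod (w $ i))\<^sup>2)"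
proof -
  have "w \<bullet>c w = (\<Sum>i<dim_vec w. complex_of_real ((cmod (w $ i))\<^sup>2))"
    by (auto simp: scalar_prod_def lessThan_atLeast0 simp del: of_real_power intro!: sum.cong)
       (metis complex_norm_square)
  then show ?thesis unfolding sq_norm_def by (simp add: Re_sum)
qed

lemma smult_mat_mult_vec: "A \<in> carrier_mat nr nc \<Longrightarrow> v \<in> carrier_vec nc \<Longrightarrow> (k \<cdot>\<^sub>m A) *\<^sub>v v = k \<cdot>\<^sub>v (A *\<^sub>v v)"
  by (intro eq_vecI) (auto simp: scalar_prod_def sum_distrib_left mult.assoc)

lemma smult_one_add_smult_mult_vec:
  fixes a b :: "'a :: comm_ring_1"
  assumes "H \<in> carrier_mat n n" "y \<in> carrier_vec n"
  shows "(a \<cdot>\<^sub>m 1\<^sub>m n + b \<cdot>\<^sub>m H) *\<^sub>v y = a \<cdot>\<^sub>v y + b \<cdot>\<^sub>v (H *\<^sub>v y)"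
  using assms by (simp add: add_mult_distrib_mat_vec[of _ n n] smult_mat_mult_vec[of _ n n])

definition real_sym_mat :: "nat \<Rightarrow> real mat \<Rightarrow> bool" where
  "real_sym_mat n N \<longleftrightarrow> N \<in> carrier_mat n n \<and> transpose_mat N = N"

lemma cmat_carrier [simp]: "cmat N \<in> carrier_mat n m \<longleftrightarrow> N \<in> carrier_mat n m"
  unfolding cmat_def by simp

lemma cmat_index [simp]:
  "i < dim_row N \<Longrightarrow> j < dim_col N \<Longrightarrow> cmat N $$ (i, j) = complex_of_real (N $$ (i, j))"
  unfolding cmat_def by simp

lemma cmat_mult_vec_index:
  assumes "N \<in> carrier_mat n n" "v \<in> carrier_vec n" "i < n"
  shows "(cmat N *\<^sub>v v) $ i = (\<Sum>j<n. complex_of_real (N $$ (i, j)) * v $ j)"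
  using assms unfolding cmat_def by (auto simp: scalar_prod_def lessThan_atLeast0 intro!: sum.cong)

lemma real_sym_mat_index:
  assumes "real_sym_mat n N" "i < n" "j < n" shows "N $$ (j, i) = N $$ (i, j)"
  by (metis assms real_sym_mat_def carrier_matD index_transpose_mat(1))

lemma cmat_hermitian:
  assumes N: "real_sym_mat n N" and u: "u \<in> carrier_vec n" and w: "w \<in> carrier_vec n"
  shows "(cmat N *\<^sub>v u) \<bullet>c w = u \<bullet>c (cmat N *\<^sub>v w)"
proof -
  have Nc: "N \<in> carrier_mat n n" using N unfolding real_sym_mat_def by simp
  note sym = real_sym_mat_index[OF N]
  have "(cmat N *\<^sub>v u) \<bullet>c w = (\<Sum>i<n. \<Sum>j<n. complex_of_real (N $$ (i, j)) * u $ j * cnj (w $ i))"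
    using u w Nc by (auto simp: scalar_prod_def lessThan_atLeast0 cmat_mult_vec_index sum_distrib_right
        intro!: sum.cong)
  also have "\<dots> = (\<Sum>j<n. \<Sum>i<n. complex_of_real (N $$ (i, j)) * u $ j * cnj (w $ i))"
    by (rule sum.swap)
  also have "\<dots> = u \<bullet>c (cmat N *\<^sub>v w)"
    using u w Nc sym by (auto simp: scalar_prod_def lessThan_atLeast0 cmat_mult_vec_index sum_distrib_left
        intro!: sum.cong)
  finally show ?thesis .
qed

lemma cmat_eigenvalue_of_real_iff:
  assumes "N \<in> carrier_mat n n"
  shows "eigenvalue (cmat N) (complex_of_real l) \<longleftrightarrow> eigenvalue N l"
  using assms
  by (simp add: cmat_def eigenvalue_root_char_poly[of _ n] of_real_hom.char_poly_hom[of _ n]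
      of_real_hom.poly_map_poly)

lemma cmat_eigenvalue_real:
  assumes N: "real_sym_mat n N" and ev: "eigenvalue (cmat N) k"
  shows "k = complex_of_real (Re k)"
proof -
  have Nc: "N \<in> carrier_mat n n" using N unfolding real_sym_mat_def by simp
  obtain v where v: "v \<in> carrier_vec n" "v \<noteq> 0\<^sub>v n" "cmat N *\<^sub>v v = k \<cdot>\<^sub>v v"
    using ev Nc unfolding eigenvalue_def eigenvector_def by auto
  have "k * (v \<bullet>c v) = cnj k * (v \<bullet>c v)"
    using cmat_hermitian[OF N v(1) v(1)] v
    by (simp add: cscalar_prod_smult_left[of _ n] cscalar_prod_smult_right[of _ n])
  moreover have "v \<bullet>c v \<noteq> 0" using v conjugate_square_eq_0_vec[of v n] by auto
  ultimately have "cnj k = k" by simp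
  then show ?thesis by (metis Reals_cnj_iff complex_is_Real_iff of_real_Re)
qed

lemma spectrum_cmat:
  assumes "real_sym_mat n N" shows "spectrum (cmat N) = complex_of_real ` spectrum N"
proof -
  have Nc: "N \<in> carrier_mat n n" using assms unfolding real_sym_mat_def by simp
  have "eigenvalue (cmat N) k \<longleftrightarrow> (\<exists>l. k = complex_of_real l \<and> eigenvalue N l)" for k
    using cmat_eigenvalue_real[OF assms] cmat_eigenvalue_of_real_iff[OF Nc] by metis
  then show ?thesis unfolding spectrum_def by auto
qed

lemma real_sym_mat_spectrum_nonempty:
  assumes "real_sym_mat n N" "n > 0" shows "spectrum N \<noteq> {}"
  using spectrum_non_empty[of "cmat N" n] spectrum_cmat[OF assms(1)] assms
  unfolding real_sym_mat_def by auto

lemma spd_mat_spectrum: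
  assumes spd: "spd_mat n N" and n: "n > 0"
  shows "real_sym_mat n N" "finite (spectrum N)" "spectrum N \<noteq> {}" "\<forall>l\<in>spectrum N. l > 0"
proof -
  have Nc: "N \<in> carrier_mat n n"
    and pd: "\<And>v. v \<in> carrier_vec n \<Longrightarrow> v \<noteq> 0\<^sub>v n \<Longrightarrow> v \<bullet> (N *\<^sub>v v) > 0"
    using spd unfolding spd_mat_def by auto
  show sym: "real_sym_mat n N" using spd unfolding spd_mat_def real_sym_mat_def by simp
  show "finite (spectrum N)" by (rule card_finite_spectrum(1)[OF Nc])
  show "spectrum N \<noteq> {}" by (rule real_sym_mat_spectrum_nonempty[OF sym n])
  show "\<forall>l\<in>spectrum N. l > 0"
  proof
    fix l assume "l \<in> spectrum N"
    then obtain v where v: "v \<in> carrier_vec n" "v \<noteq> 0\<^sub>v n" "N *\<^sub>v v = l \<cdot>\<^sub>v v"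
      using Nc unfolding spectrum_def eigenvalue_def eigenvector_def by auto
    have "0 < v \<bullet> (N *\<^sub>v v)" using pd[OF v(1,2)] .
    also have "v \<bullet> (N *\<^sub>v v) = l * (v \<bullet> v)"
      unfolding v(3) using v(1) by (simp add: scalar_prod_smult_distrib[of _ n])
    finally show "l > 0" using conjugate_square_ge_0_vec[of v] by (simp add: zero_less_mult_iff)
  qed
qed

lemma eigenvalue_smult_mat:
  fixes N :: "'a :: field mat"
  assumes N: "N \<in> carrier_mat n n" and ev: "eigenvalue (a \<cdot>\<^sub>m N) l" and a: "a \<noteq> 0"
  shows "eigenvalue N (l / a)"
proof -
  obtain v where v: "v \<in> carrier_vec n" "v \<noteq> 0\<^sub>v n" "a \<cdot>\<^sub>v (N *\<^sub>v v) = l \<cdot>\<^sub>v v"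
    using ev N unfolding eigenvalue_def eigenvector_def by (auto simp: smult_mat_mult_vec[of _ n n])
  have "N *\<^sub>v v = (inverse a * a) \<cdot>\<^sub>v (N *\<^sub>v v)" using a by simp
  also have "\<dots> = inverse a \<cdot>\<^sub>v (l \<cdot>\<^sub>v v)" by (simp only: smult_smult_assoc[symmetric] v(3))
  also have "\<dots> = (l / a) \<cdot>\<^sub>v v" by (simp add: smult_smult_assoc divide_inverse mult.commute)
  finally have "N *\<^sub>v v = (l / a) \<cdot>\<^sub>v v" .
  then show ?thesis using v N unfolding eigenvalue_def eigenvector_def by auto
qed

lemma eigenvalue_shift_mat:
  fixes N :: "'a :: field mat"
  assumes N: "N \<in> carrier_mat n n" and ev: "eigenvalue (N - t \<cdot>\<^sub>m 1\<^sub>m n) l"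
  shows "eigenvalue N (l + t)"
proof -
  obtain v where v: "v \<in> carrier_vec n" "v \<noteq> 0\<^sub>v n" "(N - t \<cdot>\<^sub>m 1\<^sub>m n) *\<^sub>v v = l \<cdot>\<^sub>v v"
    using ev N unfolding eigenvalue_def eigenvector_def by auto
  then have eq: "N *\<^sub>v v - t \<cdot>\<^sub>v v = l \<cdot>\<^sub>v v"
    using N by (simp add: minus_mult_distrib_mat_vec[of _ n n] smult_mat_mult_vec[of _ n n])
  have "N *\<^sub>v v = (l + t) \<cdot>\<^sub>v v"
  proof (rule eq_vecI)
    fix i assume "i < dim_vec ((l + t) \<cdot>\<^sub>v v)"
    then have i: "i < n" using v by simp
    have "(N *\<^sub>v v - t \<cdot>\<^sub>v v) $ i = (l \<cdot>\<^sub>v v) $ i" using eq by simp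
    then show "(N *\<^sub>v v) $ i = ((l + t) \<cdot>\<^sub>v v) $ i" using i v N by (simp add: algebra_simps)
  qed (use N v in simp)
  then show ?thesis using v N unfolding eigenvalue_def eigenvector_def by auto
qed

section \<open>Norm bounds from the spectrum\<close>

lemma sq_norm_mult_vec_le_norm_bound:
  assumes A: "A \<in> carrier_mat n n" and b: "norm_bound A c" and z: "z \<in> carrier_vec n"
  shows "sq_norm (A *\<^sub>v z) \<le> real n * (c * (\<Sum>j<n. cmod (z $ j)))\<^sup>2"
proof -
  have entry: "cmod ((A *\<^sub>v z) $ i) \<le> c * (\<Sum>j<n. cmod (z $ j))" if i: "i < n" for i
  proof -
    have "(A *\<^sub>v z) $ i = (\<Sum>j<n. A $$ (i, j) * z $ j)"
      using A z i by (auto simp: scalar_prod_def lessThan_atLeast0 intro!: sum.cong)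
    also have "cmod \<dots> \<le> (\<Sum>j<n. cmod (A $$ (i, j) * z $ j))" by (rule norm_sum)
    also have "\<dots> = (\<Sum>j<n. cmod (A $$ (i, j)) * cmod (z $ j))" by (simp add: norm_mult)
    also have "\<dots> \<le> (\<Sum>j<n. c * cmod (z $ j))"
      using b A i unfolding norm_bound_def by (intro sum_mono mult_right_mono) auto
    finally show ?thesis by (simp add: sum_distrib_left)
  qed
  have "sq_norm (A *\<^sub>v z) = (\<Sum>i<n. (cmod ((A *\<^sub>v z) $ i))\<^sup>2)" using A by (simp add: sq_norm_eq_sum)
  also have "\<dots> \<le> (\<Sum>i<n. (c * (\<Sum>j<n. cmod (z $ j)))\<^sup>2)"
    by (intro sum_mono power_mono entry) auto
  finally show ?thesis by simp
qed

text \<open>Expand \<open>\<parallel>t u - H\<^sup>2 u\<parallel>\<^sup>2 \<ge> 0\<close>, using \<open>\<langle>u, H\<^sup>2 u\<rangle> = \<parallel>H u\<parallel>\<^sup>2\<close>.\<close>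
lemma cmat_sq_norm_log_convex:
  assumes N: "real_sym_mat n N" and u: "u \<in> carrier_vec n"
  shows "2 * t * sq_norm (cmat N *\<^sub>v u) \<le> t\<^sup>2 * sq_norm u + sq_norm (cmat N *\<^sub>v (cmat N *\<^sub>v u))"
proof -
  have Nc: "cmat N \<in> carrier_mat n n" using N unfolding real_sym_mat_def by simp
  define w where "w = cmat N *\<^sub>v (cmat N *\<^sub>v u)"
  have w: "w \<in> carrier_vec n" using Nc u w_def by simp
  have "w \<bullet>c u = complex_of_real (sq_norm (cmat N *\<^sub>v u))"
    using cmat_hermitian[OF N _ u, of "cmat N *\<^sub>v u"] Nc u unfolding w_def by (simp add: cscalar_prod_self)
  then have uw: "u \<bullet>c w = complex_of_real (sq_norm (cmat N *\<^sub>v u))"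
    using cscalar_prod_swap[OF w u] by simp
  have "0 \<le> sq_norm (complex_of_real t \<cdot>\<^sub>v u + (-1) \<cdot>\<^sub>v w)" by (rule sq_norm_nonneg)
  also have "\<dots> = t\<^sup>2 * sq_norm u + sq_norm w - 2 * t * sq_norm (cmat N *\<^sub>v u)"
    using u w by (simp add: sq_norm_add[of _ n] sq_norm_smult[of _ n] cscalar_prod_smult_left[of _ n]
        cscalar_prod_smult_right[of _ n] uw)
  finally show ?thesis unfolding w_def by simp
qed

lemma bounded_log_convex_seq_le:
  fixes f :: "nat \<Rightarrow> real"
  assumes conv: "\<And>k t. 2 * t * f (Suc k) \<le> t\<^sup>2 * f k + f (Suc (Suc k))"
    and nonneg: "\<And>k. 0 \<le> f k" and bound: "\<And>k. f k \<le> B"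
  shows "f 1 \<le> f 0"
proof (rule ccontr)
  assume "\<not> ?thesis"
  then have gt: "f 0 < f 1" by simp
  show False
  proof (cases "f 0 = 0")
    case True
    define t where "t = (B + 1) / (2 * f 1)"
    have "2 * t * f 1 = B + 1" using gt True unfolding t_def by simp
    moreover have "f (Suc (Suc 0)) \<le> B" by (rule bound)
    ultimately show False using conv[of t 0] True by simp
  next
    case False
    then have f0: "f 0 > 0" using nonneg[of 0] by simp
    define q where "q = f 1 / f 0"
    have q1: "q > 1" using gt f0 unfolding q_def by simp
    have grow: "q * f k \<le> f (Suc k)" for k
    proof (induction k)
      case 0 then show ?case using f0 unfolding q_def by simp
    next
      case (Suc k)
      have "q\<^sup>2 * f k \<le> q * f (Suc k)"
        using Suc q1 by (simp add: power2_eq_square mult.assoc mult_left_mono)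
      then show ?case using conv[of q k] by simp
    qed
    have pow: "q ^ k * f 0 \<le> f k" for k
    proof (induction k)
      case (Suc k)
      have "q ^ Suc k * f 0 = q * (q ^ k * f 0)" by simp
      also have "\<dots> \<le> q * f k" by (rule mult_left_mono) (use Suc q1 in auto)
      also have "\<dots> \<le> f (Suc k)" by (rule grow)
      finally show ?case .
    qed simp
    obtain k where "B / f 0 < q ^ k" using real_arch_pow[OF q1] by blast
    then show False using pow[of k] bound[of k] f0 by (simp add: divide_less_eq)
  qed
qed

lemma pow_mat_Suc_mult_vec:
  assumes H: "H \<in> carrier_mat n n" and z: "z \<in> carrier_vec n"
  shows "(H ^\<^sub>m Suc k) *\<^sub>v z = H *\<^sub>v ((H ^\<^sub>m k) *\<^sub>v z)"
  using z
proof (induction k arbitrary: z)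
  case 0
  then show ?case using H by simp
next
  case (Suc k)
  have "(H ^\<^sub>m Suc (Suc k)) *\<^sub>v z = (H ^\<^sub>m Suc k * H) *\<^sub>v z" by simp
  also have "\<dots> = (H ^\<^sub>m Suc k) *\<^sub>v (H *\<^sub>v z)"
    using H Suc.prems by (intro assoc_mult_mat_vec) auto
  also have "\<dots> = H *\<^sub>v ((H ^\<^sub>m Suc k) *\<^sub>v z)"
    using H Suc by (simp add: assoc_mult_mat_vec[of _ n n _ n])
  finally show ?case .
qed

text \<open>A Hermitian matrix of spectral radius \<open>< 1\<close> is power bounded; then the log-convexity of
  \<open>k \<mapsto> \<parallel>H\<^sup>k z\<parallel>\<^sup>2\<close> forces \<open>\<parallel>H z\<parallel> \<le> \<parallel>z\<parallel>\<close>.\<close>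
lemma sq_norm_cmat_mult_le_of_spectrum_abs_less_1:
  assumes N: "real_sym_mat n N" and sp: "\<forall>l\<in>spectrum N. \<bar>l\<bar> < 1" and z: "z \<in> carrier_vec n"
  shows "sq_norm (cmat N *\<^sub>v z) \<le> sq_norm z"
proof (cases "n = 0")
  case True
  then have "dim_row N = 0" using N unfolding real_sym_mat_def by auto
  then have "sq_norm (cmat N *\<^sub>v z) = 0" by (simp add: sq_norm_eq_sum cmat_def)
  then show ?thesis using sq_norm_nonneg[of z] by simp
next
  case False
  define H where "H = cmat N"
  have H: "H \<in> carrier_mat n n" using N unfolding H_def real_sym_mat_def by simp
  have sr: "spectral_radius H < 1"
  proof -
    obtain k where "k \<in> spectrum H" "spectral_radius H = cmod k"
      using spectral_radius_mem_max(1)[OF H] False by auto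
    then show ?thesis using sp spectrum_cmat[OF N] unfolding H_def by auto
  qed
  obtain as where "char_poly H = (\<Prod>a\<leftarrow>as. [:- a, 1:])"
    using char_poly_factorized[OF H] by blast
  then obtain c where nb: "\<And>k. norm_bound (H ^\<^sub>m k) c"
    using spectral_radius_jnf_norm_bound_less_1[OF H sr jordan_nf_exists[OF H]] by blast
  define f where "f k = sq_norm ((H ^\<^sub>m k) *\<^sub>v z)" for k
  note pow_Suc = pow_mat_Suc_mult_vec[OF H z]
  have "f 1 \<le> f 0"
  proof (rule bounded_log_convex_seq_le[where f = f])
    show "2 * t * f (Suc k) \<le> t\<^sup>2 * f k + f (Suc (Suc k))" for k t
      unfolding f_def pow_Suc unfolding H_def
      by (rule cmat_sq_norm_log_convex[OF N mult_mat_vec_carrier[OF pow_carrier_mat[OF H] z, unfolded H_def]])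
    show "0 \<le> f k" for k unfolding f_def by (rule sq_norm_nonneg)
    show "f k \<le> real n * (c * (\<Sum>j<n. cmod (z $ j)))\<^sup>2" for k
      unfolding f_def by (rule sq_norm_mult_vec_le_norm_bound[OF pow_carrier_mat[OF H] nb z])
  qed
  moreover have "f 1 = sq_norm (H *\<^sub>v z)" "f 0 = sq_norm z"
    unfolding f_def pow_Suc[of 0] using H z by simp_all
  ultimately show ?thesis unfolding H_def by linarith
qed

lemma real_sym_mat_smult:
  assumes "real_sym_mat n N" shows "real_sym_mat n (a \<cdot>\<^sub>m N)"
  using assms real_sym_mat_index[OF assms] unfolding real_sym_mat_def by (auto intro!: eq_matI)

lemma real_sym_mat_shift:
  assumes "real_sym_mat n N" shows "real_sym_mat n (N - t \<cdot>\<^sub>m 1\<^sub>m n)"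
  using assms real_sym_mat_index[OF assms] unfolding real_sym_mat_def
  by (auto intro!: eq_matI simp: minus_carrier_mat)

lemma mult_mat_vec_zero: "A \<in> carrier_mat nr nc \<Longrightarrow> A *\<^sub>v 0\<^sub>v nc = 0\<^sub>v nr"
  by (intro eq_vecI) auto

lemma cmat_smult: "cmat (a \<cdot>\<^sub>m N) = complex_of_real a \<cdot>\<^sub>m cmat N"
  unfolding cmat_def by (auto intro!: eq_matI)

lemma cmat_shift: "N \<in> carrier_mat n n \<Longrightarrow> cmat (N - t \<cdot>\<^sub>m 1\<^sub>m n) = cmat N - complex_of_real t \<cdot>\<^sub>m 1\<^sub>m n"
  unfolding cmat_def by (auto intro!: eq_matI)

lemma sq_norm_cmat_mult_le:
  assumes N: "real_sym_mat n N" and sp: "\<forall>l\<in>spectrum N. l\<^sup>2 \<le> r2" and z: "z \<in> carrier_vec n"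
  shows "sq_norm (cmat N *\<^sub>v z) \<le> r2 * sq_norm z"
proof (rule ccontr)
  assume "\<not> ?thesis"
  then have gt: "r2 * sq_norm z < sq_norm (cmat N *\<^sub>v z)" by simp
  have Nc: "N \<in> carrier_mat n n" using N unfolding real_sym_mat_def by simp
  have "n > 0"
  proof (rule ccontr)
    assume "\<not> n > 0"
    then have "sq_norm (cmat N *\<^sub>v z) = 0" using Nc by (simp add: sq_norm_eq_sum)
    then show False using gt z \<open>\<not> n > 0\<close> by (simp add: sq_norm_eq_sum)
  qed
  then obtain l where "l \<in> spectrum N" using real_sym_mat_spectrum_nonempty[OF N] by blast
  then have r2: "r2 \<ge> 0" using sp by (meson order_trans zero_le_power2)
  have Z: "sq_norm z > 0"
    using gt r2 sq_norm_nonneg[of z] sq_norm_eq_0_iff[OF z] mult_mat_vec_zero[of "cmat N" n n] Nc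
    by (cases "z = 0\<^sub>v n") auto
  define s2 where "s2 = (r2 + sq_norm (cmat N *\<^sub>v z) / sq_norm z) / 2"
  have s2: "r2 < s2" "s2 * sq_norm z < sq_norm (cmat N *\<^sub>v z)"
    using gt Z unfolding s2_def by (auto simp: field_simps)
  define s where "s = sqrt s2"
  have s: "s > 0" "s\<^sup>2 = s2" using s2 r2 unfolding s_def by auto
  have "\<forall>l\<in>spectrum ((1 / s) \<cdot>\<^sub>m N). \<bar>l\<bar> < 1"
  proof
    fix l assume "l \<in> spectrum ((1 / s) \<cdot>\<^sub>m N)"
    then have "eigenvalue N (s * l)"
      using eigenvalue_smult_mat[OF Nc, of "1 / s" l] s unfolding spectrum_def by (simp add: mult.commute)
    then have "(s * l)\<^sup>2 \<le> r2" using sp unfolding spectrum_def by simp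
    then have "s\<^sup>2 * l\<^sup>2 < s\<^sup>2 * 1" using s s2 by (simp add: power_mult_distrib)
    then have "l\<^sup>2 < 1" using s by (metis mult_less_cancel_left_pos zero_less_power)
    then show "\<bar>l\<bar> < 1" by (simp add: abs_square_less_1)
  qed
  then have "sq_norm (cmat ((1 / s) \<cdot>\<^sub>m N) *\<^sub>v z) \<le> sq_norm z"
    by (intro sq_norm_cmat_mult_le_of_spectrum_abs_less_1[OF real_sym_mat_smult[OF N] _ z])
  also have "sq_norm (cmat ((1 / s) \<cdot>\<^sub>m N) *\<^sub>v z) = sq_norm (cmat N *\<^sub>v z) / s2"
    using Nc z s by (simp add: cmat_smult smult_mat_mult_vec[of _ n n] sq_norm_smult[of _ n] norm_divide
        power_divide)
  finally show False using s2 r2 by (simp add: divide_le_eq mult.commute)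
qed

text \<open>Completing the square in the quadratic inequality \<open>\<alpha>\<^sup>2 + c\<^sup>2 l\<^sup>2 \<le> \<chi>\<^sup>2 (\<alpha> + c l)\<^sup>2\<close>.\<close>
lemma conv_factor_le_imp_sq_dist_le:
  assumes "\<alpha> > 0" "c > 0" "l > 0" "\<chi> < 1" "conv_factor c \<alpha> l \<le> \<chi>"
  defines "t \<equiv> \<chi>\<^sup>2 * \<alpha> / ((1 - \<chi>\<^sup>2) * c)"
  shows "(l - t)\<^sup>2 \<le> t\<^sup>2 - (\<alpha> / c)\<^sup>2"
proof -
  have apos: "\<alpha> + c * l > 0" using assms by (simp add: add_pos_pos)
  have "0 \<le> conv_factor c \<alpha> l" using assms by (simp add: conv_factor_nonneg)
  then have "(conv_factor c \<alpha> l)\<^sup>2 \<le> \<chi>\<^sup>2" using assms(5) by (simp add: power_mono)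
  then have q: "\<alpha>\<^sup>2 + c\<^sup>2 * l\<^sup>2 \<le> \<chi>\<^sup>2 * (\<alpha> + c * l)\<^sup>2"
    using assms apos by (simp add: conv_factor_square divide_le_eq)
  have D: "(1 - \<chi>\<^sup>2) * c\<^sup>2 > 0"
    using assms \<open>0 \<le> conv_factor c \<alpha> l\<close> by (simp add: abs_square_less_1)
  have t: "t * ((1 - \<chi>\<^sup>2) * c) = \<chi>\<^sup>2 * \<alpha>" and ac: "c * (\<alpha> / c) = \<alpha>"
    using D unfolding t_def by auto
  have "(1 - \<chi>\<^sup>2) * c\<^sup>2 * ((l - t)\<^sup>2 - (t\<^sup>2 - (\<alpha> / c)\<^sup>2))
      = (1 - \<chi>\<^sup>2) * c\<^sup>2 * l\<^sup>2 - 2 * c * l * (t * ((1 - \<chi>\<^sup>2) * c)) + (1 - \<chi>\<^sup>2) * (c * (\<alpha> / c))\<^sup>2"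
    by (simp add: power2_eq_square algebra_simps)
  also have "\<dots> = \<alpha>\<^sup>2 + c\<^sup>2 * l\<^sup>2 - \<chi>\<^sup>2 * (\<alpha> + c * l)\<^sup>2"
    unfolding t ac by (simp add: power2_eq_square algebra_simps)
  finally have "(1 - \<chi>\<^sup>2) * c\<^sup>2 * ((l - t)\<^sup>2 - (t\<^sup>2 - (\<alpha> / c)\<^sup>2)) = \<alpha>\<^sup>2 + c\<^sup>2 * l\<^sup>2 - \<chi>\<^sup>2 * (\<alpha> + c * l)\<^sup>2" .
  then have "(1 - \<chi>\<^sup>2) * c\<^sup>2 * ((l - t)\<^sup>2 - (t\<^sup>2 - (\<alpha> / c)\<^sup>2)) \<le> 0" using q by simp
  then have "(1 - \<chi>\<^sup>2) * c\<^sup>2 * ((l - t)\<^sup>2 - (t\<^sup>2 - (\<alpha> / c)\<^sup>2)) \<le> (1 - \<chi>\<^sup>2) * c\<^sup>2 * 0"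
    by simp
  then show ?thesis unfolding mult_le_cancel_left_pos[OF D] by simp
qed

lemma sq_norm_smult_add_cmat_mult_bound:
  assumes N: "real_sym_mat n N" and pos: "\<forall>l\<in>spectrum N. l > 0"
    and \<chi>: "\<forall>l\<in>spectrum N. conv_factor c \<alpha> l \<le> \<chi>" "0 \<le> \<chi>" "\<chi> < 1"
    and \<alpha>: "\<alpha> > 0" and c: "c > 0" and z: "z \<in> carrier_vec n"
  shows "\<alpha>\<^sup>2 * sq_norm z + c\<^sup>2 * sq_norm (cmat N *\<^sub>v z)
     \<le> \<chi>\<^sup>2 * sq_norm (complex_of_real \<alpha> \<cdot>\<^sub>v z + complex_of_real c \<cdot>\<^sub>v (cmat N *\<^sub>v z))"
proof -
  have Nc: "N \<in> carrier_mat n n" using N unfolding real_sym_mat_def by simp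
  define t where "t = \<chi>\<^sup>2 * \<alpha> / ((1 - \<chi>\<^sup>2) * c)"
  define w where "w = cmat N *\<^sub>v z"
  have w: "w \<in> carrier_vec n" using Nc z unfolding w_def by simp
  define R where "R = Re (w \<bullet>c z)"
  have "\<forall>l\<in>spectrum (N - t \<cdot>\<^sub>m 1\<^sub>m n). l\<^sup>2 \<le> t\<^sup>2 - (\<alpha> / c)\<^sup>2"
  proof
    fix l assume "l \<in> spectrum (N - t \<cdot>\<^sub>m 1\<^sub>m n)"
    then have "l + t \<in> spectrum N" using eigenvalue_shift_mat[OF Nc] unfolding spectrum_def by simp
    then show "l\<^sup>2 \<le> t\<^sup>2 - (\<alpha> / c)\<^sup>2"
      using conv_factor_le_imp_sq_dist_le[OF \<alpha> c _ \<chi>(3), of "l + t"] pos \<chi>(1) unfolding t_def by simp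
  qed
  then have "sq_norm (cmat (N - t \<cdot>\<^sub>m 1\<^sub>m n) *\<^sub>v z) \<le> (t\<^sup>2 - (\<alpha> / c)\<^sup>2) * sq_norm z"
    by (rule sq_norm_cmat_mult_le[OF real_sym_mat_shift[OF N] _ z])
  also have "cmat (N - t \<cdot>\<^sub>m 1\<^sub>m n) *\<^sub>v z = w + (- complex_of_real t) \<cdot>\<^sub>v z"
    using Nc z unfolding w_def
    by (simp add: cmat_shift minus_mult_distrib_mat_vec[of _ n n] smult_mat_mult_vec[of _ n n])
      (rule eq_vecI; simp)
  finally have shift: "sq_norm w + t\<^sup>2 * sq_norm z - 2 * t * R \<le> (t\<^sup>2 - (\<alpha> / c)\<^sup>2) * sq_norm z"
    using w z unfolding R_def by (simp add: sq_norm_add[of _ n] sq_norm_smult[of _ n] cscalar_prod_smult_right[of _ n])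
  have "Re (z \<bullet>c w) = R" unfolding R_def using cscalar_prod_swap[OF w z] by simp
  then have expand: "sq_norm (complex_of_real \<alpha> \<cdot>\<^sub>v z + complex_of_real c \<cdot>\<^sub>v w)
      = \<alpha>\<^sup>2 * sq_norm z + c\<^sup>2 * sq_norm w + 2 * \<alpha> * c * R"
    using w z by (simp add: sq_norm_add[of _ n] sq_norm_smult[of _ n] cscalar_prod_smult_right[of _ n]
        cscalar_prod_smult_left[of _ n])
  have D: "(1 - \<chi>\<^sup>2) * c\<^sup>2 > 0" using \<chi> c by (simp add: abs_square_less_1)
  have t': "t * ((1 - \<chi>\<^sup>2) * c) = \<chi>\<^sup>2 * \<alpha>" and ac: "c * (\<alpha> / c) = \<alpha>"
    using D unfolding t_def by auto
  have "(1 - \<chi>\<^sup>2) * c\<^sup>2 * (sq_norm w - 2 * t * R + (\<alpha> / c)\<^sup>2 * sq_norm z) \<le> 0"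
    using shift D by (intro mult_nonneg_nonpos) (auto simp: algebra_simps)
  also have "(1 - \<chi>\<^sup>2) * c\<^sup>2 * (sq_norm w - 2 * t * R + (\<alpha> / c)\<^sup>2 * sq_norm z)
      = (1 - \<chi>\<^sup>2) * c\<^sup>2 * sq_norm w - 2 * c * R * (t * ((1 - \<chi>\<^sup>2) * c))
        + (1 - \<chi>\<^sup>2) * (c * (\<alpha> / c))\<^sup>2 * sq_norm z"
    by (simp add: power2_eq_square algebra_simps)
  finally show ?thesis unfolding w_def[symmetric] expand t' ac by (simp add: algebra_simps)
qed

section \<open>Block matrices\<close>

lemma smult_append_vec: "k \<cdot>\<^sub>v (x @\<^sub>v y) = (k \<cdot>\<^sub>v x) @\<^sub>v (k \<cdot>\<^sub>v y)"
  by (intro eq_vecI) auto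

lemma carrier_vec_append_split:
  "u \<in> carrier_vec (m + m) \<Longrightarrow> \<exists>u1 u2. u1 \<in> carrier_vec m \<and> u2 \<in> carrier_vec m \<and> u = u1 @\<^sub>v u2"
  by (metis vec_first_carrier vec_last_carrier vec_first_last_append)

lemma zero_mat_mult_vec: "u \<in> carrier_vec nc \<Longrightarrow> 0\<^sub>m nr nc *\<^sub>v u = 0\<^sub>v nr"
  by (intro eq_vecI) (auto simp: scalar_prod_def)

lemma block_diag_mult_vec:
  assumes "X \<in> carrier_mat m m" "u1 \<in> carrier_vec m" "u2 \<in> carrier_vec m"
  shows "four_block_mat X (0\<^sub>m m m) (0\<^sub>m m m) X *\<^sub>v (u1 @\<^sub>v u2) = (X *\<^sub>v u1) @\<^sub>v (X *\<^sub>v u2)"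
  unfolding four_block_mat_mult_vec[OF assms(1) zero_carrier_mat zero_carrier_mat assms]
  using assms by (simp add: zero_mat_mult_vec)

lemma blockdiag_cmat: "N \<in> carrier_mat m m \<Longrightarrow> blockdiag m (cmat N) = cmat (four_block_mat N (0\<^sub>m m m) (0\<^sub>m m m) N)"
  unfolding blockdiag_def cmat_def by (intro eq_matI) auto

lemma real_sym_mat_block_diag:
  assumes "real_sym_mat m N" shows "real_sym_mat (m + m) (four_block_mat N (0\<^sub>m m m) (0\<^sub>m m m) N)"
  using assms real_sym_mat_index[OF assms] unfolding real_sym_mat_def by (auto intro!: eq_matI)

lemma spectrum_block_diag_subset:
  assumes N: "N \<in> carrier_mat m m"
  shows "spectrum (four_block_mat N (0\<^sub>m m m) (0\<^sub>m m m) N) \<subseteq> spectrum N"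
proof
  fix l assume "l \<in> spectrum (four_block_mat N (0\<^sub>m m m) (0\<^sub>m m m) N)"
  then obtain v where v: "v \<in> carrier_vec (m + m)" "v \<noteq> 0\<^sub>v (m + m)"
    "four_block_mat N (0\<^sub>m m m) (0\<^sub>m m m) N *\<^sub>v v = l \<cdot>\<^sub>v v"
    using N unfolding spectrum_def eigenvalue_def eigenvector_def by auto
  obtain v1 v2 where v12: "v1 \<in> carrier_vec m" "v2 \<in> carrier_vec m" "v = v1 @\<^sub>v v2"
    using carrier_vec_append_split[OF v(1)] by blast
  have "(N *\<^sub>v v1) @\<^sub>v (N *\<^sub>v v2) = (l \<cdot>\<^sub>v v1) @\<^sub>v (l \<cdot>\<^sub>v v2)"
    using v(3) N v12 by (simp add: block_diag_mult_vec smult_append_vec)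
  then have "N *\<^sub>v v1 = l \<cdot>\<^sub>v v1" "N *\<^sub>v v2 = l \<cdot>\<^sub>v v2"
    using append_vec_eq[of "N *\<^sub>v v1" m "l \<cdot>\<^sub>v v1"] N v12 by auto
  moreover have "v1 \<noteq> 0\<^sub>v m \<or> v2 \<noteq> 0\<^sub>v m"
    using v(2) v12 by (auto intro!: eq_vecI)
  ultimately show "l \<in> spectrum N"
    using v12 N unfolding spectrum_def eigenvalue_def eigenvector_def by auto
qed

definition skew_block :: "nat \<Rightarrow> complex \<Rightarrow> complex \<Rightarrow> complex mat" where
  "skew_block m p q = four_block_mat (p \<cdot>\<^sub>m 1\<^sub>m m) (q \<cdot>\<^sub>m 1\<^sub>m m) ((- q) \<cdot>\<^sub>m 1\<^sub>m m) ((- p) \<cdot>\<^sub>m 1\<^sub>m m)"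

lemma skew_block_carrier [simp]: "skew_block m p q \<in> carrier_mat (m + m) (m + m)"
  unfolding skew_block_def by simp

lemma skew_block_mult_vec:
  assumes "u1 \<in> carrier_vec m" "u2 \<in> carrier_vec m"
  shows "skew_block m p q *\<^sub>v (u1 @\<^sub>v u2) = (p \<cdot>\<^sub>v u1 + q \<cdot>\<^sub>v u2) @\<^sub>v ((- q) \<cdot>\<^sub>v u1 + (- p) \<cdot>\<^sub>v u2)"
  unfolding skew_block_def using assms
  by (simp add: four_block_mat_mult_vec[of _ m m _ m _ m] smult_mat_mult_vec[of _ m m])

lemma skew_block_skew_adjoint:
  assumes p: "cnj p = - p" and q: "cnj q = q"
    and u: "u \<in> carrier_vec (m + m)" and w: "w \<in> carrier_vec (m + m)"
  shows "(skew_block m p q *\<^sub>v u) \<bullet>c w = - (u \<bullet>c (skew_block m p q *\<^sub>v w))"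
proof -
  obtain u1 u2 where U: "u1 \<in> carrier_vec m" "u2 \<in> carrier_vec m" "u = u1 @\<^sub>v u2"
    using carrier_vec_append_split[OF u] by blast
  obtain w1 w2 where W: "w1 \<in> carrier_vec m" "w2 \<in> carrier_vec m" "w = w1 @\<^sub>v w2"
    using carrier_vec_append_split[OF w] by blast
  show ?thesis unfolding U(3) W(3) skew_block_mult_vec[OF U(1,2)] skew_block_mult_vec[OF W(1,2)]
    using U W p q
    by (simp add: cscalar_prod_append[of _ m _ _ m] cscalar_prod_add_left[of _ m] cscalar_prod_add_right[of _ m]
        cscalar_prod_smult_left[of _ m] cscalar_prod_smult_right[of _ m] cscalar_prod_swap[of u2 m w1]
        cscalar_prod_swap[of u1 m w2] algebra_simps)
qed

lemma sq_norm_skew_block: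
  assumes p: "cnj p = - p" and q: "cnj q = q" and pq: "(cmod p)\<^sup>2 + (cmod q)\<^sup>2 = 1"
    and u: "u \<in> carrier_vec (m + m)"
  shows "sq_norm (skew_block m p q *\<^sub>v u) = sq_norm u"
proof -
  obtain u1 u2 where U: "u1 \<in> carrier_vec m" "u2 \<in> carrier_vec m" "u = u1 @\<^sub>v u2"
    using carrier_vec_append_split[OF u] by blast
  define x where "x = u1 \<bullet>c u2"
  have "sq_norm (skew_block m p q *\<^sub>v u)
     = ((cmod p)\<^sup>2 + (cmod q)\<^sup>2) * (sq_norm u1 + sq_norm u2)
       + 2 * Re (p * cnj q * x) + 2 * Re (q * cnj p * x)"
    unfolding U(3) skew_block_mult_vec[OF U(1,2)] x_def using U
    by (simp add: sq_norm_append[of _ m _ m] sq_norm_add[of _ m] sq_norm_smult[of _ m]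
        cscalar_prod_smult_left[of _ m] cscalar_prod_smult_right[of _ m] algebra_simps)
  moreover have "2 * Re (p * cnj q * x) + 2 * Re (q * cnj p * x) = 0" using p q by (simp add: algebra_simps)
  ultimately show ?thesis using pq U by (simp add: sq_norm_append)
qed

lemma skew_block_commute_blockdiag:
  assumes X: "X \<in> carrier_mat m m" and u: "u \<in> carrier_vec (m + m)"
  shows "skew_block m p q *\<^sub>v (blockdiag m X *\<^sub>v u) = blockdiag m X *\<^sub>v (skew_block m p q *\<^sub>v u)"
proof -
  obtain u1 u2 where U: "u1 \<in> carrier_vec m" "u2 \<in> carrier_vec m" "u = u1 @\<^sub>v u2"
    using carrier_vec_append_split[OF u] by blast
  show ?thesis unfolding U(3) blockdiag_def block_diag_mult_vec[OF X U(1,2)]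
    using X U
    by (simp add: skew_block_mult_vec block_diag_mult_vec mult_add_distrib_mat_vec[of _ m m] mult_mat_vec[of _ m m])
qed

lemma Rmat_eq_skew_block:
  "Rmat m \<nu> \<omega> \<theta> = skew_block m (- \<i> * complex_of_real (\<omega> * \<nu> / sqrt (\<nu> * \<theta>)))
     (complex_of_real (sqrt \<nu> / sqrt (\<nu> * \<theta>)))"
  unfolding Rmat_def skew_block_def by (rule eq_matI) auto

lemma Rmat_params:
  assumes \<nu>: "\<nu> > 0" and \<theta>: "\<theta> = 1 + \<nu> * \<omega>\<^sup>2"
  shows "(cmod (- \<i> * complex_of_real (\<omega> * \<nu> / sqrt (\<nu> * \<theta>))))\<^sup>2
       + (cmod (complex_of_real (sqrt \<nu> / sqrt (\<nu> * \<theta>))))\<^sup>2 = 1"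
proof -
  have "\<theta> > 0" using \<nu> \<theta> by (simp add: add_pos_nonneg)
  then have pos: "\<nu> * \<theta> > 0" using \<nu> by simp
  have i: "cmod (- \<i> * complex_of_real a) = \<bar>a\<bar>" for a by (simp add: norm_mult)
  have "(\<omega> * \<nu> / sqrt (\<nu> * \<theta>))\<^sup>2 + (sqrt \<nu> / sqrt (\<nu> * \<theta>))\<^sup>2 = ((\<omega> * \<nu>)\<^sup>2 + \<nu>) / (\<nu> * \<theta>)"
    using pos \<nu> by (simp add: power_divide add_divide_distrib)
  also have "(\<omega> * \<nu>)\<^sup>2 + \<nu> = \<nu> * \<theta>" unfolding \<theta> by (simp add: power2_eq_square algebra_simps)
  finally show ?thesis using \<nu> \<open>\<theta> > 0\<close> unfolding i norm_of_real power2_abs by simp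
qed

lemma sq_norm_smult_add_skew_mult:
  assumes H: "H \<in> carrier_mat n n"
    and herm: "\<And>u w. u \<in> carrier_vec n \<Longrightarrow> w \<in> carrier_vec n \<Longrightarrow> (H *\<^sub>v u) \<bullet>c w = u \<bullet>c (H *\<^sub>v w)"
    and R: "R \<in> carrier_mat n n"
    and skew: "\<And>u w. u \<in> carrier_vec n \<Longrightarrow> w \<in> carrier_vec n \<Longrightarrow> (R *\<^sub>v u) \<bullet>c w = - (u \<bullet>c (R *\<^sub>v w))"
    and isometry: "\<And>u. u \<in> carrier_vec n \<Longrightarrow> sq_norm (R *\<^sub>v u) = sq_norm u"
    and comm: "\<And>u. u \<in> carrier_vec n \<Longrightarrow> R *\<^sub>v (H *\<^sub>v u) = H *\<^sub>v (R *\<^sub>v u)"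
    and y: "y \<in> carrier_vec n"
  shows "sq_norm (complex_of_real \<alpha> \<cdot>\<^sub>v y + complex_of_real t \<cdot>\<^sub>v (R *\<^sub>v (H *\<^sub>v y)))
       = \<alpha>\<^sup>2 * sq_norm y + t\<^sup>2 * sq_norm (H *\<^sub>v y)"
proof -
  have hy: "H *\<^sub>v y \<in> carrier_vec n" and ry: "R *\<^sub>v y \<in> carrier_vec n"
    and rhy: "R *\<^sub>v (H *\<^sub>v y) \<in> carrier_vec n" using H R y by auto
  define x where "x = y \<bullet>c (R *\<^sub>v (H *\<^sub>v y))"
  have "x = - ((R *\<^sub>v y) \<bullet>c (H *\<^sub>v y))" unfolding x_def using skew[OF y hy] by simp
  also have "(R *\<^sub>v y) \<bullet>c (H *\<^sub>v y) = (R *\<^sub>v (H *\<^sub>v y)) \<bullet>c y"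
    using herm[OF ry y] comm[OF y] by simp
  also have "\<dots> = cnj x" unfolding x_def by (rule cscalar_prod_swap[OF y rhy])
  finally have "Re x = - Re x" by (metis cnj.sel(1) uminus_complex.sel(1))
  then have "Re x = 0" by simp
  then show ?thesis using y hy rhy
    by (simp add: sq_norm_add[of _ n] sq_norm_smult[of _ n] cscalar_prod_smult_left[of _ n]
        cscalar_prod_smult_right[of _ n] isometry x_def[symmetric])
qed

section \<open>The MBAS iteration matrix\<close>

lemma Max_conv_factor_bounds:
  assumes "finite S" "S \<noteq> {}" "\<forall>l\<in>S. l > 0" "\<alpha> > 0" "c > 0"
  shows "0 \<le> Max (conv_factor c \<alpha> ` S)" "Max (conv_factor c \<alpha> ` S) < 1"
proof -
  have "Max (conv_factor c \<alpha> ` S) \<in> conv_factor c \<alpha> ` S" using assms by simp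
  then obtain l where "l \<in> S" "Max (conv_factor c \<alpha> ` S) = conv_factor c \<alpha> l" by auto
  then show "0 \<le> Max (conv_factor c \<alpha> ` S)" "Max (conv_factor c \<alpha> ` S) < 1"
    using assms conv_factor_nonneg conv_factor_less_1 by auto
qed

lemma chi_eq_Max_conv_factor: "chi M \<theta> \<alpha> = Max (conv_factor \<theta> \<alpha> ` spectrum M)"
  unfolding chi_def conv_factor_def ..

lemma vtheta_eq_Max_conv_factor:
  "\<nu> * \<theta> \<ge> 0 \<Longrightarrow> vtheta K \<nu> \<theta> \<alpha> = Max (conv_factor (sqrt (\<nu> * \<theta>)) \<alpha> ` spectrum K)"
  unfolding vtheta_def conv_factor_def by simp

lemma sq_norm_shift_blockdiag_bound:
  assumes N: "spd_mat m N" and m: "m > 0" and \<alpha>: "\<alpha> > 0" and c: "c > 0"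
    and y: "y \<in> carrier_vec (m + m)"
  shows "\<alpha>\<^sup>2 * sq_norm y + c\<^sup>2 * sq_norm (blockdiag m (cmat N) *\<^sub>v y)
     \<le> (Max (conv_factor c \<alpha> ` spectrum N))\<^sup>2
        * sq_norm ((complex_of_real \<alpha> \<cdot>\<^sub>m 1\<^sub>m (m + m) + complex_of_real c \<cdot>\<^sub>m blockdiag m (cmat N)) *\<^sub>v y)"
proof -
  note sp = spd_mat_spectrum[OF N m]
  have Nc: "N \<in> carrier_mat m m" using sp(1) unfolding real_sym_mat_def by simp
  let ?B = "four_block_mat N (0\<^sub>m m m) (0\<^sub>m m m) N"
  have sub: "spectrum ?B \<subseteq> spectrum N" by (rule spectrum_block_diag_subset[OF Nc])
  have H: "blockdiag m (cmat N) \<in> carrier_mat (m + m) (m + m)" using Nc unfolding blockdiag_def by simp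
  show ?thesis unfolding smult_one_add_smult_mult_vec[OF H y] unfolding blockdiag_cmat[OF Nc]
  proof (intro sq_norm_smult_add_cmat_mult_bound[OF real_sym_mat_block_diag[OF sp(1)] _ _ _ _ \<alpha> c y])
    show "\<forall>l\<in>spectrum ?B. l > 0" using sub sp(4) by blast
    show "\<forall>l\<in>spectrum ?B. conv_factor c \<alpha> l \<le> Max (conv_factor c \<alpha> ` spectrum N)"
      using sub sp(2) by auto
    show "0 \<le> Max (conv_factor c \<alpha> ` spectrum N)" "Max (conv_factor c \<alpha> ` spectrum N) < 1"
      using Max_conv_factor_bounds[OF sp(2,3,4) \<alpha> c] by auto
  qed
qed

lemma sq_norm_smult_add_skew_block_blockdiag:
  assumes p: "cnj p = - p" and q: "cnj q = q" and pq: "(cmod p)\<^sup>2 + (cmod q)\<^sup>2 = 1"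
    and N: "real_sym_mat m N" and y: "y \<in> carrier_vec (m + m)"
  shows "sq_norm (complex_of_real \<alpha> \<cdot>\<^sub>v y + complex_of_real t \<cdot>\<^sub>v (skew_block m p q *\<^sub>v (blockdiag m (cmat N) *\<^sub>v y)))
       = \<alpha>\<^sup>2 * sq_norm y + t\<^sup>2 * sq_norm (blockdiag m (cmat N) *\<^sub>v y)"
proof (rule sq_norm_smult_add_skew_mult[OF _ _ skew_block_carrier _ _ _ y])
  have Nc: "N \<in> carrier_mat m m" using N unfolding real_sym_mat_def by simp
  then show "blockdiag m (cmat N) \<in> carrier_mat (m + m) (m + m)" unfolding blockdiag_def by simp
  show "(blockdiag m (cmat N) *\<^sub>v u) \<bullet>c w = u \<bullet>c (blockdiag m (cmat N) *\<^sub>v w)"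
    if "u \<in> carrier_vec (m + m)" "w \<in> carrier_vec (m + m)" for u w
    unfolding blockdiag_cmat[OF Nc] by (rule cmat_hermitian[OF real_sym_mat_block_diag[OF N] that])
  show "(skew_block m p q *\<^sub>v u) \<bullet>c w = - (u \<bullet>c (skew_block m p q *\<^sub>v w))"
    if "u \<in> carrier_vec (m + m)" "w \<in> carrier_vec (m + m)" for u w
    by (rule skew_block_skew_adjoint[OF p q that])
  show "sq_norm (skew_block m p q *\<^sub>v u) = sq_norm u" if "u \<in> carrier_vec (m + m)" for u
    by (rule sq_norm_skew_block[OF p q pq that])
  show "skew_block m p q *\<^sub>v (blockdiag m (cmat N) *\<^sub>v u) = blockdiag m (cmat N) *\<^sub>v (skew_block m p q *\<^sub>v u)"
    if "u \<in> carrier_vec (m + m)" for u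
    by (rule skew_block_commute_blockdiag[OF _ that]) (use Nc in simp)
qed

lemma sq_norm_shift_Rmat_blockdiag:
  assumes "\<nu> > 0" "\<theta> = 1 + \<nu> * \<omega>\<^sup>2" "real_sym_mat m N" "y \<in> carrier_vec (m + m)"
  shows "sq_norm ((complex_of_real \<alpha> \<cdot>\<^sub>m 1\<^sub>m (m + m)
            + complex_of_real t \<cdot>\<^sub>m (Rmat m \<nu> \<omega> \<theta> * blockdiag m (cmat N))) *\<^sub>v y)
       = \<alpha>\<^sup>2 * sq_norm y + t\<^sup>2 * sq_norm (blockdiag m (cmat N) *\<^sub>v y)"
proof -
  have H: "blockdiag m (cmat N) \<in> carrier_mat (m + m) (m + m)"
    using assms(3) unfolding blockdiag_def real_sym_mat_def by simp
  moreover have R: "Rmat m \<nu> \<omega> \<theta> \<in> carrier_mat (m + m) (m + m)" unfolding Rmat_eq_skew_block by simp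
  ultimately have "Rmat m \<nu> \<omega> \<theta> * blockdiag m (cmat N) \<in> carrier_mat (m + m) (m + m)" by simp
  then have eq: "(complex_of_real \<alpha> \<cdot>\<^sub>m 1\<^sub>m (m + m) + complex_of_real t \<cdot>\<^sub>m (Rmat m \<nu> \<omega> \<theta> * blockdiag m (cmat N))) *\<^sub>v y
      = complex_of_real \<alpha> \<cdot>\<^sub>v y + complex_of_real t \<cdot>\<^sub>v (Rmat m \<nu> \<omega> \<theta> *\<^sub>v (blockdiag m (cmat N) *\<^sub>v y))"
    using H R assms(4) by (simp add: smult_one_add_smult_mult_vec)
  show ?thesis unfolding eq unfolding Rmat_eq_skew_block
    by (rule sq_norm_smult_add_skew_block_blockdiag[OF _ _ Rmat_params[OF assms(1,2)] assms(3,4)]) simp_all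
qed

lemma eq_0_of_sq_norm_lower_bound:
  assumes "y \<in> carrier_vec n" "\<alpha> \<noteq> 0" "c \<ge> 0"
    and "\<alpha>\<^sup>2 * sq_norm y + c * sq_norm (H *\<^sub>v y) \<le> k * sq_norm (X *\<^sub>v y)" "X *\<^sub>v y = 0\<^sub>v n"
  shows "y = 0\<^sub>v n"
proof -
  have "c * sq_norm (H *\<^sub>v y) \<ge> 0" using assms(3) sq_norm_nonneg by simp
  then have "\<alpha>\<^sup>2 * sq_norm y \<le> 0" using assms(4,5) by simp
  then show ?thesis using assms(1,2) sq_norm_eq_0_iff sq_norm_nonneg[of y] by (simp add: mult_le_0_iff)
qed

lemma minv_inverse:
  assumes A: "A \<in> carrier_mat n n"
    and inj: "\<And>v. v \<in> carrier_vec n \<Longrightarrow> A *\<^sub>v v = 0\<^sub>v n \<Longrightarrow> v = 0\<^sub>v n"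
  shows "A * minv A = 1\<^sub>m n" "minv A * A = 1\<^sub>m n" "minv A \<in> carrier_mat n n"
proof -
  have "det A \<noteq> 0" using det_0_iff_vec_prod_zero[OF A] inj by auto
  then have "A \<in> Units (ring_mat TYPE(complex) n ())" by (rule det_non_zero_imp_unit[OF A])
  then obtain B where B: "mat_inverse A = Some B" using mat_inverse(1)[OF A] by fastforce
  then show "A * minv A = 1\<^sub>m n" "minv A * A = 1\<^sub>m n" "minv A \<in> carrier_mat n n"
    using mat_inverse(2)[OF A B] unfolding minv_def by auto
qed

lemma mult_mat_vec_right_inverse:
  fixes A A' :: "'a :: semiring_1 mat"
  assumes "A \<in> carrier_mat n n" "A' \<in> carrier_mat n n" "A * A' = 1\<^sub>m n" "w \<in> carrier_vec n"
  shows "A *\<^sub>v (A' *\<^sub>v w) = w"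
  using assms by (subst assoc_mult_mat_vec[symmetric, of _ n n _ n]) auto

lemma eigenvalue_minv_mult_bound:
  fixes A B C D :: "complex mat"
  assumes A: "A \<in> carrier_mat n n" and B: "B \<in> carrier_mat n n"
    and C: "C \<in> carrier_mat n n" and D: "D \<in> carrier_mat n n"
    and injA: "\<And>v. v \<in> carrier_vec n \<Longrightarrow> A *\<^sub>v v = 0\<^sub>v n \<Longrightarrow> v = 0\<^sub>v n"
    and injC: "\<And>v. v \<in> carrier_vec n \<Longrightarrow> C *\<^sub>v v = 0\<^sub>v n \<Longrightarrow> v = 0\<^sub>v n"
    and BC: "\<And>y. y \<in> carrier_vec n \<Longrightarrow> sq_norm (B *\<^sub>v y) \<le> \<chi>\<^sup>2 * sq_norm (C *\<^sub>v y)"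
    and DA: "\<And>y. y \<in> carrier_vec n \<Longrightarrow> sq_norm (D *\<^sub>v y) \<le> \<psi>\<^sup>2 * sq_norm (A *\<^sub>v y)"
    and nonneg: "0 \<le> \<chi>" "0 \<le> \<psi>"
    and ev: "eigenvalue (minv A * B * minv C * D) l"
  shows "cmod l \<le> \<chi> * \<psi>"
proof -
  note iA = minv_inverse[OF A injA] and iC = minv_inverse[OF C injC]
  have P: "minv A * B * minv C * D \<in> carrier_mat n n"
    by (intro mult_carrier_mat[of _ n n _ n] iA(3) iC(3) B D)
  obtain v where v: "v \<in> carrier_vec n" "v \<noteq> 0\<^sub>v n" "(minv A * B * minv C * D) *\<^sub>v v = l \<cdot>\<^sub>v v"
    using ev P unfolding eigenvalue_def eigenvector_def by auto
  define y where "y = minv C *\<^sub>v (D *\<^sub>v v)"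
  have y: "y \<in> carrier_vec n" unfolding y_def using iC(3) D v by simp
  have Cy: "C *\<^sub>v y = D *\<^sub>v v"
    unfolding y_def using C D v iC by (simp add: mult_mat_vec_right_inverse)
  have "minv A *\<^sub>v (B *\<^sub>v y) = l \<cdot>\<^sub>v v"
    using v(3) iA(3) iC(3) B D v(1) unfolding y_def by (simp add: assoc_mult_mat_vec[of _ n n _ n])
  then have "A *\<^sub>v (minv A *\<^sub>v (B *\<^sub>v y)) = l \<cdot>\<^sub>v (A *\<^sub>v v)"
    using A v(1) by (simp add: mult_mat_vec[of _ n n])
  then have By: "B *\<^sub>v y = l \<cdot>\<^sub>v (A *\<^sub>v v)"
    using A B y iA by (simp add: mult_mat_vec_right_inverse)
  have Av: "A *\<^sub>v v \<in> carrier_vec n" using A v by simp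
  have pos: "sq_norm (A *\<^sub>v v) > 0"
    using injA[OF v(1)] v(2) sq_norm_eq_0_iff[OF Av] sq_norm_nonneg[of "A *\<^sub>v v"] by force
  have "(cmod l)\<^sup>2 * sq_norm (A *\<^sub>v v) = sq_norm (B *\<^sub>v y)" unfolding By sq_norm_smult[OF Av] ..
  also have "\<dots> \<le> \<chi>\<^sup>2 * sq_norm (D *\<^sub>v v)" using BC[OF y] unfolding Cy .
  also have "\<dots> \<le> \<chi>\<^sup>2 * (\<psi>\<^sup>2 * sq_norm (A *\<^sub>v v))" by (rule mult_left_mono[OF DA[OF v(1)]]) simp
  also have "\<dots> = (\<chi> * \<psi>)\<^sup>2 * sq_norm (A *\<^sub>v v)" by (simp add: power_mult_distrib)
  finally have "(cmod l)\<^sup>2 \<le> (\<chi> * \<psi>)\<^sup>2" using pos by simp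
  then show ?thesis by (rule power2_le_imp_le) (use nonneg in simp)
qed

lemma spectral_radius_minv_mult_le:
  fixes A B C D :: "complex mat"
  assumes "n > 0" "A \<in> carrier_mat n n" "B \<in> carrier_mat n n" "C \<in> carrier_mat n n" "D \<in> carrier_mat n n"
    and "\<And>v. v \<in> carrier_vec n \<Longrightarrow> A *\<^sub>v v = 0\<^sub>v n \<Longrightarrow> v = 0\<^sub>v n"
    and "\<And>v. v \<in> carrier_vec n \<Longrightarrow> C *\<^sub>v v = 0\<^sub>v n \<Longrightarrow> v = 0\<^sub>v n"
    and "\<And>y. y \<in> carrier_vec n \<Longrightarrow> sq_norm (B *\<^sub>v y) \<le> \<chi>\<^sup>2 * sq_norm (C *\<^sub>v y)"
    and "\<And>y. y \<in> carrier_vec n \<Longrightarrow> sq_norm (D *\<^sub>v y) \<le> \<psi>\<^sup>2 * sq_norm (A *\<^sub>v y)"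
    and "0 \<le> \<chi>" "0 \<le> \<psi>"
  shows "spectral_radius (minv A * B * minv C * D) \<le> \<chi> * \<psi>"
proof -
  have "minv A * B * minv C * D \<in> carrier_mat n n"
    by (intro mult_carrier_mat[of _ n n _ n] minv_inverse(3)[OF assms(2,6)] minv_inverse(3)[OF assms(4,7)]
        assms(3,5))
  then obtain l where "l \<in> spectrum (minv A * B * minv C * D)"
    and l: "spectral_radius (minv A * B * minv C * D) = cmod l"
    using spectral_radius_mem_max(1) assms(1) by blast
  then have "eigenvalue (minv A * B * minv C * D) l" unfolding spectrum_def by simp
  from eigenvalue_minv_mult_bound[OF assms(2-) this] show ?thesis unfolding l .
qed

lemma diff_smult_mat_eq_add_uminus:
  fixes X Y :: "'a :: comm_ring_1 mat"
  shows "X \<in> carrier_mat n n \<Longrightarrow> Y \<in> carrier_mat n n \<Longrightarrow> Y - b \<cdot>\<^sub>m X = Y + (- b) \<cdot>\<^sub>m X"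
  by (intro eq_matI) auto

lemma spectral_radius_MBAS_le:
  assumes m: "m > 0" and M: "spd_mat m M" and K: "spd_mat m K"
    and \<nu>: "\<nu> > 0" and \<theta>: "\<theta> = 1 + \<nu> * \<omega>\<^sup>2" and \<alpha>: "\<alpha> > 0"
  shows "spectral_radius (MBAS m M K \<nu> \<omega> \<alpha>) \<le> chi M \<theta> \<alpha> * vtheta K \<nu> \<theta> \<alpha>"
proof -
  note SM = spd_mat_spectrum[OF M m] and SK = spd_mat_spectrum[OF K m]
  have \<theta>0: "\<theta> > 0" using \<theta> \<nu> by (simp add: add_pos_nonneg)
  define s where "s = sqrt (\<nu> * \<theta>)"
  have s0: "s > 0" using \<nu> \<theta>0 unfolding s_def by simp
  define H1 where "H1 = blockdiag m (cmat M)"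
  define H2 where "H2 = blockdiag m (cmat K)"
  define R where "R = Rmat m \<nu> \<omega> \<theta>"
  define I where "I = (1\<^sub>m (m + m) :: complex mat)"
  define A where "A = complex_of_real \<alpha> \<cdot>\<^sub>m I + complex_of_real s \<cdot>\<^sub>m H2"
  define B where "B = complex_of_real \<alpha> \<cdot>\<^sub>m I + complex_of_real \<theta> \<cdot>\<^sub>m (R * H1)"
  define C where "C = complex_of_real \<alpha> \<cdot>\<^sub>m I + complex_of_real \<theta> \<cdot>\<^sub>m H1"
  define D where "D = complex_of_real \<alpha> \<cdot>\<^sub>m I + complex_of_real (- s) \<cdot>\<^sub>m (R * H2)"
  have H: "H1 \<in> carrier_mat (m + m) (m + m)" "H2 \<in> carrier_mat (m + m) (m + m)"
    "R \<in> carrier_mat (m + m) (m + m)" "I \<in> carrier_mat (m + m) (m + m)"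
    using SM(1) SK(1) unfolding H1_def H2_def R_def I_def Rmat_eq_skew_block blockdiag_def real_sym_mat_def
    by auto
  have "MBAS m M K \<nu> \<omega> \<alpha> = minv A * B * minv C * D"
    using diff_smult_mat_eq_add_uminus[of "R * H2" "m + m" "complex_of_real \<alpha> \<cdot>\<^sub>m I"] H
    unfolding MBAS_def Let_def \<theta>[symmetric] mult_2 A_def B_def C_def D_def s_def H1_def H2_def R_def I_def
    by simp
  moreover have chi: "chi M \<theta> \<alpha> = Max (conv_factor \<theta> \<alpha> ` spectrum M)" by (rule chi_eq_Max_conv_factor)
  moreover have vt: "vtheta K \<nu> \<theta> \<alpha> = Max (conv_factor s \<alpha> ` spectrum K)"
    unfolding s_def using \<nu> \<theta>0 by (simp add: vtheta_eq_Max_conv_factor)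
  note normC = sq_norm_shift_blockdiag_bound[OF M m \<alpha> \<theta>0, folded chi H1_def I_def, folded C_def]
  note normA = sq_norm_shift_blockdiag_bound[OF K m \<alpha> s0, folded vt H2_def I_def, folded A_def]
  note normB = sq_norm_shift_Rmat_blockdiag[OF \<nu> \<theta> SM(1), of _ \<alpha> \<theta>, folded R_def H1_def I_def, folded B_def]
  note normD = sq_norm_shift_Rmat_blockdiag[OF \<nu> \<theta> SK(1), of _ \<alpha> "- s", folded R_def H2_def I_def, folded D_def]
  have "spectral_radius (minv A * B * minv C * D) \<le> chi M \<theta> \<alpha> * vtheta K \<nu> \<theta> \<alpha>"
  proof (rule spectral_radius_minv_mult_le)
    show "m + m > 0" using m by simp
    show "A \<in> carrier_mat (m + m) (m + m)" "B \<in> carrier_mat (m + m) (m + m)"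
      "C \<in> carrier_mat (m + m) (m + m)" "D \<in> carrier_mat (m + m) (m + m)"
      using H unfolding A_def B_def C_def D_def by auto
    show "y = 0\<^sub>v (m + m)" if "y \<in> carrier_vec (m + m)" "A *\<^sub>v y = 0\<^sub>v (m + m)" for y
      using eq_0_of_sq_norm_lower_bound[OF that(1) _ _ normA[OF that(1)] that(2)] \<alpha> by simp
    show "y = 0\<^sub>v (m + m)" if "y \<in> carrier_vec (m + m)" "C *\<^sub>v y = 0\<^sub>v (m + m)" for y
      using eq_0_of_sq_norm_lower_bound[OF that(1) _ _ normC[OF that(1)] that(2)] \<alpha> by simp
    show "sq_norm (B *\<^sub>v y) \<le> (chi M \<theta> \<alpha>)\<^sup>2 * sq_norm (C *\<^sub>v y)" if "y \<in> carrier_vec (m + m)" for y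
      using normB[OF that] normC[OF that] by simp
    show "sq_norm (D *\<^sub>v y) \<le> (vtheta K \<nu> \<theta> \<alpha>)\<^sup>2 * sq_norm (A *\<^sub>v y)" if "y \<in> carrier_vec (m + m)" for y
      using normD[OF that] normA[OF that] by simp
    show "0 \<le> chi M \<theta> \<alpha>" "0 \<le> vtheta K \<nu> \<theta> \<alpha>"
      unfolding chi vt using Max_conv_factor_bounds(1)[OF SM(2-4) \<alpha> \<theta>0]
        Max_conv_factor_bounds(1)[OF SK(2-4) \<alpha> s0] by simp_all
  qed
  ultimately show ?thesis by simp
qed

theorem mainTheorem4:
  fixes m :: nat and M K :: "real mat" and \<nu> \<omega> \<theta> :: real
  assumes "m > 0"
    and "spd_mat m M" and "spd_mat m K"
    and "\<nu> > 0" and "\<omega> > 0"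
    and "\<theta> = 1 + \<nu> * \<omega>\<^sup>2"
  shows "(\<forall>\<alpha>>0. chi M \<theta> (\<theta> * sqrt (Min (spectrum M) * Max (spectrum M))) \<le> chi M \<theta> \<alpha>)
       \<and> (\<forall>\<alpha>>0. vtheta K \<nu> \<theta> (sqrt (\<nu> * \<theta> * Min (spectrum K) * Max (spectrum K))) \<le> vtheta K \<nu> \<theta> \<alpha>)
       \<and> (\<forall>\<alpha>>0. spectral_radius (MBAS m M K \<nu> \<omega> \<alpha>) \<le> chi M \<theta> \<alpha>
                 \<and> spectral_radius (MBAS m M K \<nu> \<omega> \<alpha>) \<le> vtheta K \<nu> \<theta> \<alpha>)"
proof -
  note SM = spd_mat_spectrum[OF assms(2,1)] and SK = spd_mat_spectrum[OF assms(3,1)]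
  have \<theta>: "\<theta> > 0" using assms(4,6) by (simp add: add_pos_nonneg)
  then have s: "sqrt (\<nu> * \<theta>) > 0" "\<nu> * \<theta> \<ge> 0" using assms(4) by simp_all
  have "chi M \<theta> (\<theta> * sqrt (Min (spectrum M) * Max (spectrum M))) \<le> chi M \<theta> \<alpha>" if "\<alpha> > 0" for \<alpha>
    unfolding chi_eq_Max_conv_factor by (rule Max_conv_factor_optimal[OF SM(2-4) \<theta> that])
  moreover have "vtheta K \<nu> \<theta> (sqrt (\<nu> * \<theta> * Min (spectrum K) * Max (spectrum K))) \<le> vtheta K \<nu> \<theta> \<alpha>"
    if "\<alpha> > 0" for \<alpha>
  proof -
    have "sqrt (\<nu> * \<theta> * Min (spectrum K) * Max (spectrum K))
        = sqrt (\<nu> * \<theta>) * sqrt (Min (spectrum K) * Max (spectrum K))"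
      by (simp add: real_sqrt_mult mult.assoc)
    then show ?thesis
      unfolding vtheta_eq_Max_conv_factor[OF s(2)] using Max_conv_factor_optimal[OF SK(2-4) s(1) that] by simp
  qed
  moreover have "spectral_radius (MBAS m M K \<nu> \<omega> \<alpha>) \<le> chi M \<theta> \<alpha>"
    "spectral_radius (MBAS m M K \<nu> \<omega> \<alpha>) \<le> vtheta K \<nu> \<theta> \<alpha>" if "\<alpha> > 0" for \<alpha>
  proof -
    have "0 \<le> chi M \<theta> \<alpha>" "chi M \<theta> \<alpha> \<le> 1" "0 \<le> vtheta K \<nu> \<theta> \<alpha>" "vtheta K \<nu> \<theta> \<alpha> \<le> 1"
      unfolding chi_eq_Max_conv_factor vtheta_eq_Max_conv_factor[OF s(2)]
      using Max_conv_factor_bounds[OF SM(2-4) that \<theta>] Max_conv_factor_bounds[OF SK(2-4) that s(1)] by auto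
    then have "chi M \<theta> \<alpha> * vtheta K \<nu> \<theta> \<alpha> \<le> chi M \<theta> \<alpha>"
      "chi M \<theta> \<alpha> * vtheta K \<nu> \<theta> \<alpha> \<le> vtheta K \<nu> \<theta> \<alpha>"
      by (simp_all add: mult_left_le mult_left_le_one_le)
    then show "spectral_radius (MBAS m M K \<nu> \<omega> \<alpha>) \<le> chi M \<theta> \<alpha>"
      "spectral_radius (MBAS m M K \<nu> \<omega> \<alpha>) \<le> vtheta K \<nu> \<theta> \<alpha>"
      using spectral_radius_MBAS_le[OF assms(1-4,6) that] by linarith+
  qed
  ultimately show ?thesis by blast
qed

end
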